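(* Let $q>1$ with conjugate exponent $q'$, let $V$ be a Banach space, $f\in C_c(\mathbb R^d;V)$ and $v\in C^1_0(\mathbb R^d)$ (continuously differentiable, vanishing at infinity). Let $R_1,R_2>0$. Then for any $x,y\in\mathbb R^d$ with $|x-y|\le R_2$ and such that $f(y-z)=0$ whenever $|z|\le R_1$, $$\|(f*v)(y)\|_V\le M\big(\mathbb M_x^{R_1+R_2}\|f\|_V^q(x)\big)^{1/q}\int_{R_1}^\infty(R_2+\rho)^d\Big(\int_{\partial B_1}|\nabla v(\rho w)\cdot w|^{q'}S_1(dw)\Big)^{1/q'}d\rho,$$ where $M=\big(\pi^{d/2}/\Gamma(\tfrac d2+1)\big)^{1/q}(1/d)^{1/q'}$.
   Context: $S_1(dw)$ is surface measure on the unit sphere $\partial B_1\subset\mathbb R^d$ (counting measure on $\{-1,1\}$ when $d=1$). For a locally integrable real function $h$ on $\mathbb R^d$ and $R\ge0$, $\mathbb M_x^Rh(x)=\sup_{r>R}|B_r(x)|^{-1}\int_{B_r(x)}|h(y)|dy$; here it is applied to $h=\|f(\cdot)\|_V^q$. *)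

theory Defs
  imports "HOL-Analysis.Analysis"
begin

text \<open>Surface measure on the unit sphere of a Euclidean space of dimension d, defined as
  the cone measure: S_1(A) = d * Lebesgue measure of the cone {t w : 0 < t < 1, w in A},
  i.e. d times the push-forward of Lebesgue measure on the open unit ball under x / |x|.
  For d = 1 this is counting measure on {-1, 1}.\<close>
definition sphere_measure :: "'a::euclidean_space measure" where
  "sphere_measure = scale_measure (of_nat DIM('a))
     (distr (restrict_space lborel (ball 0 1)) borel (\<lambda>x. x /\<^sub>R norm x))"

definition maximal_fun :: "real \<Rightarrow> ('a::euclidean_space \<Rightarrow> real) \<Rightarrow> 'a \<Rightarrow> real" where
  "maximal_fun R h x =
     (SUP r\<in>{R<..}. (LINT y:ball x r|lborel. \<bar>h y\<bar>) / measure lborel (ball x r))"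

text \<open>Convolution (f * v)(y) = int f(y - z) v(z) dz, as a (Henstock-Kurzweil) integral over R^d,
  which agrees with the Bochner integral for the continuous compactly supported integrands here.\<close>
definition convol :: "('a::euclidean_space \<Rightarrow> 'b::banach) \<Rightarrow> ('a \<Rightarrow> real) \<Rightarrow> 'a \<Rightarrow> 'b" where
  "convol f v y = integral UNIV (\<lambda>z. v z *\<^sub>R f (y - z))"

end

(*
  Since v vanishes at infinity, integrating its derivative along the ray through z gives
  |v(z)| <= int_{|z|}^oo |grad v(rho w) . w| d rho with w = z/|z|.  Inserting this into
  |(f*v)(y)| <= int |v(z)| |f(y - z)| dz and exchanging the integrals (Tonelli) leaves, for each
  rho > R1, an integral of |f(y - z)| |grad v(rho z/|z|) . z/|z|| over the ball B_rho; the range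
  rho <= R1 drops out because f(y - .) vanishes on the closed R1-ball.  Hoelder's inequality on
  B_rho splits this integral into a q-norm and a q'-norm.  The q-th power of the first is at most
  the maximal function times |B_{R2+rho}|, since B_rho(y) lies in B_{R2+rho}(x); in polar
  coordinates (S_1 is the cone measure) the q'-th power of the second equals
  (rho^d/d) int |grad v(rho w) . w|^q' S_1(dw).  Finally rho^d <= (R2+rho)^d.
*)

theory Submission
  imports Defs
begin

section \<open>Hoelder's inequality for nonnegative integrals\<close>

lemma nn_integral_mult_eq_0_if_powr:
  fixes F G :: "'c \<Rightarrow> real"
  assumes "p > 0" and "F \<in> borel_measurable M" and "\<And>x. F x \<ge> 0"
    and "(\<integral>\<^sup>+x. ennreal (F x powr p) \<partial>M) = 0"
  shows "(\<integral>\<^sup>+x. ennreal (F x * G x) \<partial>M) = 0"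
proof -
  have "AE x in M. ennreal (F x powr p) = 0"
    using assms(2,4) by (subst (asm) nn_integral_0_iff_AE) auto
  then have "AE x in M. ennreal (F x * G x) = 0"
    by eventually_elim (use assms(1,3) in auto)
  then show ?thesis
    by (simp add: nn_integral_cong_AE)
qed

lemma Youngs_inequality_normalized:
  fixes p q A B x y :: real
  assumes p: "p > 1" and q: "q = p / (p - 1)" and A: "A > 0" and B: "B > 0"
    and x: "x \<ge> 0" and y: "y \<ge> 0"
  shows "x * y \<le> A powr (1/p) * B powr (1/q) * (x powr p / (p * A) + y powr q / (q * B))"
proof -
  define a where "a = A powr (1/p)"
  define b where "b = B powr (1/q)"
  have q1: "q > 1" and pq: "1/p + 1/q = 1"
    using p by (auto simp: q field_simps)
  have a: "a > 0" and b: "b > 0"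
    using A B by (auto simp: a_def b_def)
  have "(x / a) * (y / b) \<le> (x / a) powr p / p + (y / b) powr q / q"
    by (rule Youngs_inequality[OF p q1 pq]) (use x y a b in auto)
  also have "(x / a) powr p = x powr p / A"
    using x a A p by (simp add: powr_divide a_def powr_powr)
  also have "(y / b) powr q = y powr q / B"
    using y b B q1 by (simp add: powr_divide b_def powr_powr)
  finally show ?thesis
    using a b by (simp add: a_def[symmetric] b_def[symmetric] field_simps)
qed

lemma nn_integral_mult_le_Hoelder:
  fixes F G :: "'c \<Rightarrow> real" and p q A B :: real
  assumes p: "p > 1" and q: "q = p / (p - 1)"
    and [measurable]: "F \<in> borel_measurable M" "G \<in> borel_measurable M"
    and F_nonneg: "\<And>x. F x \<ge> 0" and G_nonneg: "\<And>x. G x \<ge> 0"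
    and F_le: "(\<integral>\<^sup>+x. ennreal (F x powr p) \<partial>M) \<le> ennreal A"
    and G_le: "(\<integral>\<^sup>+x. ennreal (G x powr q) \<partial>M) \<le> ennreal B"
    and A: "A \<ge> 0" and B: "B \<ge> 0"
  shows "(\<integral>\<^sup>+x. ennreal (F x * G x) \<partial>M) \<le> ennreal (A powr (1/p) * B powr (1/q))"
proof (cases "A = 0 \<or> B = 0")
  case True
  then have "(\<integral>\<^sup>+x. ennreal (F x * G x) \<partial>M) = 0"
  proof
    assume "A = 0"
    then show ?thesis
      using F_le p F_nonneg by (intro nn_integral_mult_eq_0_if_powr[of p]) auto
  next
    assume "B = 0"
    then have "(\<integral>\<^sup>+x. ennreal (G x * F x) \<partial>M) = 0"
      using G_le p G_nonneg by (intro nn_integral_mult_eq_0_if_powr[of q]) (auto simp: q)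
    then show ?thesis
      by (simp add: mult.commute)
  qed
  then show ?thesis
    by simp
next
  case False
  then have "A > 0" "B > 0"
    using A B by auto
  define ab where "ab = A powr (1/p) * B powr (1/q)"
  define c where "c = 1 / (p * A)"
  define d where "d = 1 / (q * B)"
  have cd: "c \<ge> 0" "d \<ge> 0" "c * A + d * B = 1"
    using \<open>A > 0\<close> \<open>B > 0\<close> p by (auto simp: c_def d_def q field_simps)
  have "(\<integral>\<^sup>+x. ennreal (F x * G x) \<partial>M)
      \<le> (\<integral>\<^sup>+x. ennreal ab * (ennreal c * ennreal (F x powr p) + ennreal d * ennreal (G x powr q)) \<partial>M)"
  proof (rule nn_integral_mono)
    fix x
    have "ennreal (F x * G x) \<le> ennreal (ab * (c * F x powr p + d * G x powr q))"
      using Youngs_inequality_normalized[OF p q \<open>A > 0\<close> \<open>B > 0\<close> F_nonneg G_nonneg]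
      by (intro ennreal_leI) (simp add: ab_def c_def d_def)
    also have "\<dots> = ennreal ab * (ennreal c * ennreal (F x powr p) + ennreal d * ennreal (G x powr q))"
      using cd by (simp add: ab_def ennreal_mult ennreal_plus)
    finally show "ennreal (F x * G x) \<le> \<dots>" .
  qed
  also have "\<dots> = ennreal ab * (ennreal c * (\<integral>\<^sup>+x. ennreal (F x powr p) \<partial>M)
      + ennreal d * (\<integral>\<^sup>+x. ennreal (G x powr q) \<partial>M))"
    by (simp add: nn_integral_add nn_integral_cmult)
  also have "\<dots> \<le> ennreal ab * (ennreal c * ennreal A + ennreal d * ennreal B)"
    by (intro add_mono mult_left_mono F_le G_le) auto
  also have "\<dots> = ennreal ab"
    using cd A B by (simp add: ennreal_mult[symmetric] ennreal_plus[symmetric] del: ennreal_plus)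
  finally show ?thesis
    by (simp add: ab_def)
qed

lemma conjugate_powr_mult_le:
  fixes q q' M \<omega> S \<rho> r :: real and d :: nat
  assumes q: "q > 1" and q': "q' = q / (q - 1)"
    and M: "0 \<le> M" and \<omega>: "0 \<le> \<omega>" and S: "0 \<le> S" and \<rho>: "0 < \<rho>" "\<rho> \<le> r"
  shows "(M * (\<omega> * r ^ d)) powr (1/q) * (\<rho> ^ d / d * S) powr (1/q')
    \<le> \<omega> powr (1/q) * (1 / real d) powr (1/q') * M powr (1/q) * (r ^ d * S powr (1/q'))"
proof -
  have q'1: "q' > 1"
    using q by (simp add: q' less_divide_eq)
  have r: "0 < r"
    using \<rho> by linarith
  have "(M * (\<omega> * r ^ d)) powr (1/q) * (\<rho> ^ d / d * S) powr (1/q')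
      = (\<omega> powr (1/q) * (1 / real d) powr (1/q') * M powr (1/q))
        * ((r ^ d) powr (1/q) * (\<rho> ^ d) powr (1/q') * S powr (1/q'))"
  proof -
    have "(M * (\<omega> * r ^ d)) powr (1/q) = M powr (1/q) * \<omega> powr (1/q) * (r ^ d) powr (1/q)"
      using M \<omega> r by (simp add: powr_mult)
    moreover have "(\<rho> ^ d / d * S) powr (1/q') = (\<rho> ^ d) powr (1/q') * (1 / real d) powr (1/q') * S powr (1/q')"
      using S \<rho> powr_mult[of "\<rho> ^ d * (1 / real d)" S] powr_mult[of "\<rho> ^ d" "1 / real d"]
      by simp
    ultimately show ?thesis
      by (simp only: ac_simps)
  qed
  also have "\<dots> \<le> (\<omega> powr (1/q) * (1 / real d) powr (1/q') * M powr (1/q)) * (r ^ d * S powr (1/q'))"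
  proof (intro mult_left_mono mult_right_mono)
    have "(\<rho> ^ d) powr (1/q') \<le> (r ^ d) powr (1/q')"
      using \<rho> q'1 by (intro powr_mono2 power_mono) auto
    then have "(r ^ d) powr (1/q) * (\<rho> ^ d) powr (1/q') \<le> (r ^ d) powr (1/q) * (r ^ d) powr (1/q')"
      by (intro mult_left_mono) auto
    also have "\<dots> = r ^ d"
      using r q by (simp add: powr_add[symmetric] q' field_simps)
    finally show "(r ^ d) powr (1/q) * (\<rho> ^ d) powr (1/q') \<le> r ^ d" .
  qed auto
  finally show ?thesis .
qed

section \<open>Decay along rays\<close>

lemma abs_le_nn_integral_abs_deriv_at_top:
  fixes h h' :: "real \<Rightarrow> real"
  assumes deriv: "\<And>t. (h has_real_derivative h' t) (at t)"
    and cont: "continuous_on UNIV h'" and lim: "(h \<longlongrightarrow> 0) at_top"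
  shows "ennreal \<bar>h t0\<bar> \<le> (\<integral>\<^sup>+t\<in>{t0<..}. ennreal \<bar>h' t\<bar> \<partial>lborel)"
    (is "_ \<le> ?I")
proof (rule tendsto_lowerbound)
  show "\<forall>\<^sub>F b in at_top. ennreal \<bar>h t0\<bar> \<le> ennreal \<bar>h b\<bar> + ?I"
    using eventually_gt_at_top[of t0]
  proof eventually_elim
    fix b assume "t0 < b"
    have ftc: "(h' has_integral (h b - h t0)) {t0..b}"
      using \<open>t0 < b\<close> by (intro fundamental_theorem_of_calculus)
        (auto intro: has_field_derivative_at_within deriv simp: has_real_derivative_iff_has_vector_derivative[symmetric])
    have int_abs: "(\<lambda>t. \<bar>h' t\<bar>) integrable_on {t0..b}"
      using continuous_on_subset[OF continuous_on_rabs[OF cont] subset_UNIV]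
      by (rule integrable_continuous_interval)
    define J where "J = integral {t0..b} (\<lambda>t. \<bar>h' t\<bar>)"
    have diff: "\<bar>h b - h t0\<bar> \<le> J"
      using integral_norm_bound_integral[OF has_integral_integrable[OF ftc] int_abs]
      by (simp add: integral_unique[OF ftc] J_def)
    have "ennreal J = (\<integral>\<^sup>+t\<in>{t0..b}. ennreal \<bar>h' t\<bar> \<partial>lborel)"
      using nn_integral_has_integral_lebesgue'[OF _ integrable_integral[OF int_abs]]
      by (simp add: J_def)
    also have "\<dots> \<le> ?I"
      using AE_lborel_singleton[of t0]
      by (intro nn_integral_mono_AE, eventually_elim) (auto simp: indicator_def)
    finally have J_le: "ennreal J \<le> ?I" .
    have "ennreal \<bar>h t0\<bar> \<le> ennreal (\<bar>h b\<bar> + J)"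
      using diff by (intro ennreal_leI) linarith
    also have "\<dots> = ennreal \<bar>h b\<bar> + ennreal J"
      using diff by (intro ennreal_plus) auto
    also have "\<dots> \<le> ennreal \<bar>h b\<bar> + ?I"
      using J_le by (rule add_left_mono)
    finally show "ennreal \<bar>h t0\<bar> \<le> ennreal \<bar>h b\<bar> + ?I" .
  qed
  show "((\<lambda>b. ennreal \<bar>h b\<bar> + ?I) \<longlongrightarrow> ?I) at_top"
    using tendsto_add[OF tendsto_ennrealI[OF tendsto_rabs[OF lim]] tendsto_const[of ?I]] by simp
qed simp

lemma borel_measurable_continuous_blinfun_apply:
  fixes v' :: "'a::euclidean_space \<Rightarrow> 'a \<Rightarrow>\<^sub>L real"
  assumes "continuous_on UNIV v'" "A \<in> borel_measurable M" "B \<in> borel_measurable M"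
  shows "(\<lambda>p. blinfun_apply (v' (A p)) (B p)) \<in> borel_measurable M"
proof -
  have "continuous_on UNIV (\<lambda>p::'a \<times> 'a. blinfun_apply (v' (fst p)) (snd p))"
    by (intro continuous_intros continuous_on_compose2[OF assms(1)]) auto
  then have "(\<lambda>p::'a \<times> 'a. blinfun_apply (v' (fst p)) (snd p)) \<in> borel_measurable borel"
    by (rule borel_measurable_continuous_onI)
  from measurable_compose[OF borel_measurable_Pair[OF assms(2,3)] this] show ?thesis
    by simp
qed

lemma abs_le_nn_integral_radial_derivative:
  fixes v :: "'a::euclidean_space \<Rightarrow> real" and v' :: "'a \<Rightarrow> 'a \<Rightarrow>\<^sub>L real"
  assumes v_deriv: "\<And>z. (v has_derivative blinfun_apply (v' z)) (at z)"
    and v'_cont: "continuous_on UNIV v'"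
    and v_vanish: "(v \<longlongrightarrow> 0) at_infinity"
    and z: "z \<noteq> 0"
  shows "ennreal \<bar>v z\<bar> \<le> (\<integral>\<^sup>+\<rho>\<in>{norm z<..}.
      ennreal \<bar>blinfun_apply (v' (\<rho> *\<^sub>R (z /\<^sub>R norm z))) (z /\<^sub>R norm z)\<bar> \<partial>lborel)"
proof -
  define u where "u = z /\<^sub>R norm z"
  have "norm u = 1"
    using z by (simp add: u_def)
  then have ray_to_infinity: "filterlim (\<lambda>t. t *\<^sub>R u) at_infinity at_top"
    by (simp add: filterlim_at_infinity_conv_norm_at_top filterlim_abs_real)
  have "((\<lambda>t. v (t *\<^sub>R u)) has_real_derivative blinfun_apply (v' (t *\<^sub>R u)) u) (at t)" for t
  proof -
    have "((\<lambda>t. t *\<^sub>R u) has_derivative (\<lambda>s. s *\<^sub>R u)) (at t)"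
      by (auto intro!: derivative_eq_intros)
    from has_derivative_compose[OF this v_deriv] show ?thesis
      unfolding has_field_derivative_def
      by (rule has_derivative_eq_rhs) (auto simp: blinfun.scaleR_right)
  qed
  moreover have "continuous_on UNIV (\<lambda>t. blinfun_apply (v' (t *\<^sub>R u)) u)"
    by (intro continuous_intros continuous_on_compose2[OF v'_cont]) auto
  moreover have "((\<lambda>t. v (t *\<^sub>R u)) \<longlongrightarrow> 0) at_top"
    using v_vanish ray_to_infinity by (rule filterlim_compose)
  ultimately have "ennreal \<bar>v (norm z *\<^sub>R u)\<bar> \<le> (\<integral>\<^sup>+\<rho>\<in>{norm z<..}.
      ennreal \<bar>blinfun_apply (v' (\<rho> *\<^sub>R u)) u\<bar> \<partial>lborel)"
    by (rule abs_le_nn_integral_abs_deriv_at_top)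
  then show ?thesis
    using z by (simp add: u_def)
qed

section \<open>Polar coordinates\<close>

lemma nn_integral_lborel_affine:
  fixes f :: "'a::euclidean_space \<Rightarrow> ennreal"
  assumes [measurable]: "f \<in> borel_measurable borel" and c: "c \<noteq> 0"
  shows "(\<integral>\<^sup>+x. f x \<partial>lborel) = ennreal (\<bar>c\<bar> ^ DIM('a)) * (\<integral>\<^sup>+x. f (t + c *\<^sub>R x) \<partial>lborel)"
  by (subst lborel_affine[OF c, of t]) (simp add: nn_integral_density nn_integral_distr nn_integral_cmult)

lemma nn_integral_lborel_reflect:
  fixes f :: "'a::euclidean_space \<Rightarrow> ennreal"
  assumes "f \<in> borel_measurable borel"
  shows "(\<integral>\<^sup>+z. f (y - z) \<partial>lborel) = (\<integral>\<^sup>+z. f z \<partial>lborel)"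
  using nn_integral_lborel_affine[OF assms, of "-1" y] by simp

lemma sets_sphere_measure[measurable_cong]: "sets sphere_measure = sets borel"
  by (simp add: sphere_measure_def)

lemma nn_integral_sphere_measure:
  fixes \<phi> :: "'a::euclidean_space \<Rightarrow> ennreal"
  assumes [measurable]: "\<phi> \<in> borel_measurable borel"
  shows "(\<integral>\<^sup>+w. \<phi> w \<partial>sphere_measure)
    = of_nat DIM('a) * (\<integral>\<^sup>+x\<in>ball 0 1. \<phi> (x /\<^sub>R norm x) \<partial>lborel)"
proof -
  have "(\<integral>\<^sup>+w. \<phi> w \<partial>sphere_measure) = of_nat DIM('a) *
      (\<integral>\<^sup>+w. \<phi> w \<partial>distr (restrict_space lborel (ball 0 1)) borel (\<lambda>x. x /\<^sub>R norm x))"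
    unfolding sphere_measure_def by (rule nn_integral_scale_measure) simp
  also have "(\<integral>\<^sup>+w. \<phi> w \<partial>distr (restrict_space lborel (ball 0 1)) borel (\<lambda>x. x /\<^sub>R norm x))
      = (\<integral>\<^sup>+x. \<phi> (x /\<^sub>R norm x) \<partial>restrict_space lborel (ball 0 1))"
    by (rule nn_integral_distr) (auto intro: measurable_restrict_space1)
  also have "\<dots> = (\<integral>\<^sup>+x\<in>ball 0 1. \<phi> (x /\<^sub>R norm x) \<partial>lborel)"
    by (rule nn_integral_restrict_space) simp
  finally show ?thesis .
qed

lemma nn_integral_radial_ball:
  fixes \<phi> :: "'a::euclidean_space \<Rightarrow> ennreal"
  assumes [measurable]: "\<phi> \<in> borel_measurable borel" and \<rho>: "\<rho> > 0"
  shows "(\<integral>\<^sup>+z\<in>ball 0 \<rho>. \<phi> (z /\<^sub>R norm z) \<partial>lborel)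
    = ennreal (\<rho> ^ DIM('a) / DIM('a)) * (\<integral>\<^sup>+w. \<phi> w \<partial>sphere_measure)"
proof -
  have scale: "(\<rho> *\<^sub>R x) /\<^sub>R norm (\<rho> *\<^sub>R x) = x /\<^sub>R norm x"
    "indicator (ball 0 \<rho>) (\<rho> *\<^sub>R x) = (indicator (ball 0 1) x :: ennreal)" for x :: 'a
    by (cases "x = 0") (use \<rho> in \<open>auto simp: indicator_def mult_less_cancel_left1\<close>)
  have "(\<integral>\<^sup>+z\<in>ball 0 \<rho>. \<phi> (z /\<^sub>R norm z) \<partial>lborel)
      = ennreal (\<bar>\<rho>\<bar> ^ DIM('a)) * (\<integral>\<^sup>+x. \<phi> ((0 + \<rho> *\<^sub>R x) /\<^sub>R norm (0 + \<rho> *\<^sub>R x))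
          * indicator (ball 0 \<rho>) (0 + \<rho> *\<^sub>R x) \<partial>lborel)"
    using \<rho> by (intro nn_integral_lborel_affine) (measurable, auto)
  also have "\<dots> = ennreal (\<rho> ^ DIM('a)) * (\<integral>\<^sup>+x\<in>ball 0 1. \<phi> (x /\<^sub>R norm x) \<partial>lborel)"
    using \<rho> by (simp only: scale add_0 abs_of_pos)
  also have "ennreal (\<rho> ^ DIM('a)) = ennreal (\<rho> ^ DIM('a) / DIM('a)) * of_nat DIM('a)"
    by (simp add: ennreal_of_nat_eq_real_of_nat ennreal_mult''[symmetric])
  finally show ?thesis
    by (simp add: nn_integral_sphere_measure mult.assoc)
qed

lemma finite_measure_sphere_measure: "finite_measure (sphere_measure :: 'a::euclidean_space measure)"
proof (rule finite_measureI)
  have "emeasure (sphere_measure :: 'a measure) (space sphere_measure)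
      = of_nat DIM('a) * emeasure lborel (ball (0::'a) 1)"
    using nn_integral_sphere_measure[of "\<lambda>_::'a. 1"] by simp
  then show "emeasure (sphere_measure :: 'a measure) (space sphere_measure) \<noteq> \<infinity>"
    by (simp add: emeasure_ball ennreal_of_nat_eq_real_of_nat ennreal_mult'[symmetric])
qed

lemma integrable_sphere_measure:
  fixes \<phi> :: "'a::euclidean_space \<Rightarrow> real"
  assumes "continuous_on UNIV \<phi>"
  shows "integrable sphere_measure \<phi>"
proof -
  have [measurable]: "\<phi> \<in> borel_measurable borel"
    using assms by (rule borel_measurable_continuous_onI)
  have "bounded (\<phi> ` cball 0 1)"
    by (intro compact_imp_bounded compact_continuous_image continuous_on_subset[OF assms]) auto
  then obtain C where C: "\<forall>t\<in>\<phi> ` cball 0 1. norm t \<le> C"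
    unfolding bounded_iff by blast
  have C_radial: "norm (\<phi> (x /\<^sub>R norm x)) \<le> C" for x :: 'a
    using C by (cases "x = 0") auto
  have "(\<integral>\<^sup>+w. ennreal (norm (\<phi> w)) \<partial>sphere_measure)
      = of_nat DIM('a) * (\<integral>\<^sup>+x\<in>ball 0 1. ennreal (norm (\<phi> (x /\<^sub>R norm x))) \<partial>lborel)"
    by (rule nn_integral_sphere_measure) measurable
  also have "\<dots> \<le> of_nat DIM('a) * (\<integral>\<^sup>+x\<in>ball (0::'a) 1. ennreal C \<partial>lborel)"
    using C_radial by (intro mult_left_mono nn_integral_mono mult_right_mono ennreal_leI) auto
  also have "\<dots> < \<infinity>"
    by (simp add: nn_integral_cmult_indicator emeasure_ball ennreal_mult_less_top of_nat_less_top)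
  finally show ?thesis
    by (intro integrableI_bounded) auto
qed

lemma borel_measurable_sphere_integral[measurable]:
  fixes \<phi> :: "real \<Rightarrow> 'a::euclidean_space \<Rightarrow> real"
  assumes [measurable]: "case_prod \<phi> \<in> borel_measurable (borel \<Otimes>\<^sub>M borel)"
  shows "(\<lambda>\<rho>. \<integral>w. \<phi> \<rho> w \<partial>sphere_measure) \<in> borel_measurable borel"
proof -
  interpret finite_measure "sphere_measure :: 'a measure"
    by (rule finite_measure_sphere_measure)
  show ?thesis
    by (rule borel_measurable_lebesgue_integral) measurable
qed

lemma set_nn_integral_radial_ball_eq_integral:
  fixes \<psi> :: "'a::euclidean_space \<Rightarrow> real"
  assumes \<psi>_cont: "continuous_on UNIV \<psi>" and \<psi>_nonneg: "\<And>w. 0 \<le> \<psi> w" and \<rho>: "0 < \<rho>"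
  shows "(\<integral>\<^sup>+z\<in>ball 0 \<rho>. ennreal (\<psi> (z /\<^sub>R norm z)) \<partial>lborel)
    = ennreal (\<rho> ^ DIM('a) / DIM('a) * (\<integral>w. \<psi> w \<partial>sphere_measure))"
proof -
  have [measurable]: "\<psi> \<in> borel_measurable borel"
    using \<psi>_cont by (rule borel_measurable_continuous_onI)
  have "(\<integral>\<^sup>+w. ennreal (\<psi> w) \<partial>sphere_measure) = ennreal (\<integral>w. \<psi> w \<partial>sphere_measure)"
    using \<psi>_nonneg by (intro nn_integral_eq_integral integrable_sphere_measure \<psi>_cont) auto
  moreover have "0 \<le> (\<integral>w. \<psi> w \<partial>sphere_measure)"
    using \<psi>_nonneg by (rule Bochner_Integration.integral_nonneg)
  moreover have "(\<integral>\<^sup>+z\<in>ball 0 \<rho>. ennreal (\<psi> (z /\<^sub>R norm z)) \<partial>lborel)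
      = ennreal (\<rho> ^ DIM('a) / DIM('a)) * (\<integral>\<^sup>+w. ennreal (\<psi> w) \<partial>sphere_measure)"
    by (rule nn_integral_radial_ball[OF _ \<rho>]) measurable
  ultimately show ?thesis
    using \<rho> by (subst ennreal_mult'') auto
qed

section \<open>The truncated maximal function\<close>

lemma set_nn_integral_ball_eq_set_integral:
  fixes h :: "'a::euclidean_space \<Rightarrow> real"
  assumes h_cont: "continuous_on UNIV h" and h_nonneg: "\<And>u. 0 \<le> h u"
  shows "(\<integral>\<^sup>+u\<in>ball x r. ennreal (h u) \<partial>lborel) = ennreal (LINT u:ball x r|lborel. \<bar>h u\<bar>)"
proof -
  have "set_integrable lborel (cball x r) (\<lambda>u. \<bar>h u\<bar>)"
    unfolding set_integrable_def
    by (intro borel_integrable_compact compact_cball continuous_on_subset[OF continuous_on_rabs[OF h_cont]]) auto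
  then have "integrable lborel (\<lambda>u. indicator (ball x r) u *\<^sub>R \<bar>h u\<bar>)"
    unfolding set_integrable_def[symmetric] by (rule set_integrable_subset) auto
  then have "(\<integral>\<^sup>+u. ennreal (indicator (ball x r) u *\<^sub>R \<bar>h u\<bar>) \<partial>lborel) = ennreal (LINT u:ball x r|lborel. \<bar>h u\<bar>)"
    unfolding set_lebesgue_integral_def by (rule nn_integral_eq_integral) auto
  moreover have "(\<integral>\<^sup>+u. ennreal (indicator (ball x r) u *\<^sub>R \<bar>h u\<bar>) \<partial>lborel)
      = (\<integral>\<^sup>+u\<in>ball x r. ennreal (h u) \<partial>lborel)"
    by (intro nn_integral_cong) (auto simp: indicator_def h_nonneg)
  ultimately show ?thesis
    by simp
qed

(* The bound B matters: maximal_fun is a supremum in the reals, which carries no information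
   for an unbounded set of averages. *)
lemma ball_average_le_maximal_fun:
  fixes h :: "'a::euclidean_space \<Rightarrow> real"
  assumes h_cont: "continuous_on UNIV h" and h_nonneg: "\<And>u. 0 \<le> h u" and h_le: "\<And>u. h u \<le> B"
    and R: "0 \<le> R" "R < r"
  shows "(LINT u:ball x r|lborel. \<bar>h u\<bar>) / measure lborel (ball x r) \<le> maximal_fun R h x"
proof -
  have "(LINT u:ball x s|lborel. \<bar>h u\<bar>) / measure lborel (ball x s) \<le> B" if "0 < s" for s
  proof -
    have "ennreal (LINT u:ball x s|lborel. \<bar>h u\<bar>) \<le> (\<integral>\<^sup>+u\<in>ball x s. ennreal B \<partial>lborel)"
      unfolding set_nn_integral_ball_eq_set_integral[OF h_cont h_nonneg, symmetric]
      using h_le by (intro nn_integral_mono mult_right_mono ennreal_leI) auto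
    also have "\<dots> = ennreal (B * measure lborel (ball x s))"
      using h_nonneg[of x] h_le[of x] that
      by (simp add: nn_integral_cmult_indicator emeasure_ball content_ball ennreal_mult)
    finally show ?thesis
      using h_nonneg[of x] h_le[of x] that
      by (auto simp: divide_le_eq content_ball_pos ennreal_le_iff)
  qed
  then show ?thesis
    unfolding maximal_fun_def using R by (intro cSUP_upper bdd_aboveI2[of _ _ B]) auto
qed

lemma maximal_fun_nonneg:
  fixes h :: "'a::euclidean_space \<Rightarrow> real"
  assumes "continuous_on UNIV h" "\<And>u. 0 \<le> h u" "\<And>u. h u \<le> B" "0 \<le> R"
  shows "0 \<le> maximal_fun R h x"
proof -
  have "0 \<le> (LINT u:ball x (R + 1)|lborel. \<bar>h u\<bar>)"
    unfolding set_lebesgue_integral_def by (intro Bochner_Integration.integral_nonneg) auto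
  then have "0 \<le> (LINT u:ball x (R + 1)|lborel. \<bar>h u\<bar>) / measure lborel (ball x (R + 1))"
    by simp
  then show ?thesis
    using ball_average_le_maximal_fun[OF assms, of "R + 1" x] by linarith
qed

lemma set_nn_integral_ball_le_maximal_fun:
  fixes h :: "'a::euclidean_space \<Rightarrow> real"
  assumes h_cont: "continuous_on UNIV h" and h_nonneg: "\<And>u. 0 \<le> h u" and h_le: "\<And>u. h u \<le> B"
    and R: "0 \<le> R" "R < r"
  shows "(\<integral>\<^sup>+u\<in>ball x r. ennreal (h u) \<partial>lborel) \<le> ennreal (maximal_fun R h x * measure lborel (ball x r))"
  using ball_average_le_maximal_fun[OF assms, of x] R
  by (simp add: set_nn_integral_ball_eq_set_integral[OF h_cont h_nonneg] divide_le_eq content_ball_pos ennreal_leI)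

lemma set_nn_integral_reflected_ball_le_maximal_fun:
  fixes h :: "'a::euclidean_space \<Rightarrow> real"
  assumes h_cont: "continuous_on UNIV h" and h_nonneg: "\<And>u. 0 \<le> h u" and h_le: "\<And>u. h u \<le> B"
    and xy: "dist x y \<le> R2" and R: "0 \<le> R" "R < R2 + \<rho>"
  shows "(\<integral>\<^sup>+z\<in>ball 0 \<rho>. ennreal (h (y - z)) \<partial>lborel)
    \<le> ennreal (maximal_fun R h x * measure lborel (ball x (R2 + \<rho>)))"
proof -
  have [measurable]: "h \<in> borel_measurable borel"
    using h_cont by (rule borel_measurable_continuous_onI)
  have [measurable]: "ball y \<rho> \<in> sets borel"
    by simp
  have "(\<integral>\<^sup>+z\<in>ball 0 \<rho>. ennreal (h (y - z)) \<partial>lborel)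
      = (\<integral>\<^sup>+z. ennreal (h (y - z) * indicator (ball y \<rho>) (y - z)) \<partial>lborel)"
    by (intro nn_integral_cong) (auto simp: indicator_def dist_norm)
  also have "\<dots> = (\<integral>\<^sup>+u. ennreal (h u * indicator (ball y \<rho>) u) \<partial>lborel)"
    by (rule nn_integral_lborel_reflect) measurable
  also have "\<dots> \<le> (\<integral>\<^sup>+u\<in>ball x (R2 + \<rho>). ennreal (h u) \<partial>lborel)"
  proof (intro nn_integral_mono)
    have "ball y \<rho> \<subseteq> ball x (R2 + \<rho>)"
      using xy by (simp add: ball_subset_ball_iff dist_commute)
    then show "ennreal (h u * indicator (ball y \<rho>) u) \<le> ennreal (h u) * indicator (ball x (R2 + \<rho>)) u" for u
      by (auto simp: indicator_def h_nonneg)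
  qed
  also have "\<dots> \<le> ennreal (maximal_fun R h x * measure lborel (ball x (R2 + \<rho>)))"
    by (rule set_nn_integral_ball_le_maximal_fun[OF h_cont h_nonneg h_le R])
  finally show ?thesis .
qed

section \<open>The convolution estimate\<close>

lemma bounded_range_compact_support:
  fixes f :: "'a::topological_space \<Rightarrow> 'b::real_normed_vector"
  assumes "continuous_on UNIV f" "compact K" "\<And>z. z \<notin> K \<Longrightarrow> f z = 0"
  shows "bounded (range f)"
proof (rule bounded_subset)
  show "bounded (insert 0 (f ` K))"
    unfolding bounded_insert
    by (intro compact_imp_bounded compact_continuous_image continuous_on_subset[OF assms(1)] assms(2)) simp
  show "range f \<subseteq> insert 0 (f ` K)"
    using assms(3) by auto
qed

lemma norm_convol_le_nn_integral:
  fixes f :: "'a::euclidean_space \<Rightarrow> 'b::banach" and v :: "'a \<Rightarrow> real"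
  assumes f_cont: "continuous_on UNIV f" and K: "compact K" and f_supp: "\<And>z. z \<notin> K \<Longrightarrow> f z = 0"
    and v_cont: "continuous_on UNIV v"
  shows "ennreal (norm (convol f v y)) \<le> (\<integral>\<^sup>+z. ennreal (\<bar>v z\<bar> * norm (f (y - z))) \<partial>lborel)"
proof -
  define g where "g z = \<bar>v z\<bar> * norm (f (y - z))" for z
  have "continuous_on UNIV (\<lambda>z. f (y - z))"
    by (rule continuous_on_compose2[OF f_cont]) (auto intro: continuous_intros)
  then have g_cont: "continuous_on UNIV g"
    unfolding g_def by (intro continuous_on_mult continuous_on_rabs continuous_on_norm v_cont)
  have g_nonneg: "0 \<le> g z" for z
    by (simp add: g_def)
  have "compact ((\<lambda>k. y - k) ` K)"
    by (intro compact_continuous_image K continuous_intros)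
  then obtain c where c: "(\<lambda>k. y - k) ` K \<subseteq> cbox (-c) c"
    using bounded_subset_cbox_symmetric compact_imp_bounded by blast
  have g_zero: "g z = 0" if "z \<notin> cbox (-c) c" for z
  proof -
    have "y - z \<notin> K"
    proof
      assume "y - z \<in> K"
      then have "y - (y - z) \<in> (\<lambda>k. y - k) ` K"
        by (rule imageI)
      with that c show False
        by auto
    qed
    then show ?thesis
      by (simp add: g_def f_supp)
  qed
  have g_int: "g integrable_on UNIV"
    using integrable_continuous[OF continuous_on_subset[OF g_cont subset_UNIV]] g_zero
    by (rule integrable_on_superset) auto
  have "norm (convol f v y) \<le> integral UNIV g"
  proof (cases "(\<lambda>z. v z *\<^sub>R f (y - z)) integrable_on UNIV")
    case True
    then show ?thesis
      unfolding convol_def by (rule integral_norm_bound_integral[OF _ g_int]) (simp add: g_def)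
  next
    case False
    then show ?thesis
      unfolding convol_def using g_nonneg by (simp add: not_integrable_integral integral_nonneg[OF g_int])
  qed
  moreover have "(\<integral>\<^sup>+z. ennreal (g z) \<partial>lborel) = integral UNIV g"
    using g_cont g_nonneg g_int
    by (intro nn_integral_has_integral_lborel borel_measurable_continuous_onI) auto
  ultimately show ?thesis
    by (simp add: g_def ennreal_leI)
qed

lemma nn_integral_abs_mult_le_radial:
  fixes v :: "'a::euclidean_space \<Rightarrow> real" and v' :: "'a \<Rightarrow> 'a \<Rightarrow>\<^sub>L real" and F :: "'a \<Rightarrow> real"
  assumes v_deriv: "\<And>z. (v has_derivative blinfun_apply (v' z)) (at z)"
    and v'_cont: "continuous_on UNIV v'"
    and v_vanish: "(v \<longlongrightarrow> 0) at_infinity"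
    and [measurable]: "F \<in> borel_measurable borel" and F_nonneg: "\<And>z. 0 \<le> F z"
    and F_zero: "\<And>z. norm z \<le> R \<Longrightarrow> F z = 0" and R: "0 \<le> R"
  shows "(\<integral>\<^sup>+z. ennreal (\<bar>v z\<bar> * F z) \<partial>lborel)
    \<le> (\<integral>\<^sup>+\<rho>\<in>{R<..}. (\<integral>\<^sup>+z\<in>ball 0 \<rho>.
          ennreal (F z * \<bar>blinfun_apply (v' (\<rho> *\<^sub>R (z /\<^sub>R norm z))) (z /\<^sub>R norm z)\<bar>) \<partial>lborel) \<partial>lborel)"
proof -
  note [measurable] = borel_measurable_continuous_blinfun_apply[OF v'_cont]
  define G where "G \<rho> z = \<bar>blinfun_apply (v' (\<rho> *\<^sub>R (z /\<^sub>R norm z))) (z /\<^sub>R norm z)\<bar>" for \<rho> z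
  define H where "H z \<rho> = (if norm z < \<rho> \<and> R < \<rho> then ennreal (F z * G \<rho> z) else 0)" for z \<rho>
  have ray: "ennreal (\<bar>v z\<bar> * F z) \<le> (\<integral>\<^sup>+\<rho>. H z \<rho> \<partial>lborel)" for z
  proof (cases "norm z \<le> R")
    case True
    then show ?thesis
      by (simp add: F_zero)
  next
    case False
    then have "z \<noteq> 0"
      using R by auto
    have "ennreal (\<bar>v z\<bar> * F z) = ennreal (F z) * ennreal \<bar>v z\<bar>"
      by (simp add: ennreal_mult F_nonneg mult.commute)
    also have "\<dots> \<le> ennreal (F z) * (\<integral>\<^sup>+\<rho>\<in>{norm z<..}. ennreal (G \<rho> z) \<partial>lborel)"
      unfolding G_def
      by (intro mult_left_mono abs_le_nn_integral_radial_derivative[OF v_deriv v'_cont v_vanish \<open>z \<noteq> 0\<close>]) auto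
    also have "\<dots> = (\<integral>\<^sup>+\<rho>. ennreal (F z) * (ennreal (G \<rho> z) * indicator {norm z<..} \<rho>) \<partial>lborel)"
      by (rule nn_integral_cmult[symmetric]) (simp add: G_def)
    also have "\<dots> = (\<integral>\<^sup>+\<rho>. H z \<rho> \<partial>lborel)"
      using False by (intro nn_integral_cong) (auto simp: H_def indicator_def ennreal_mult F_nonneg G_def)
    finally show ?thesis .
  qed
  have lborel_pair: "pair_sigma_finite (lborel :: 'a measure) (lborel :: real measure)"
    by (simp add: pair_sigma_finite_def lborel.sigma_finite_measure_axioms)
  have "(\<integral>\<^sup>+z. ennreal (\<bar>v z\<bar> * F z) \<partial>lborel) \<le> (\<integral>\<^sup>+z. (\<integral>\<^sup>+\<rho>. H z \<rho> \<partial>lborel) \<partial>lborel)"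
    using ray by (rule nn_integral_mono)
  also have "\<dots> = (\<integral>\<^sup>+\<rho>. (\<integral>\<^sup>+z. H z \<rho> \<partial>lborel) \<partial>lborel)"
    by (rule pair_sigma_finite.Fubini'[OF lborel_pair, symmetric]) (unfold H_def G_def, measurable)
  also have "\<dots> = (\<integral>\<^sup>+\<rho>\<in>{R<..}. (\<integral>\<^sup>+z\<in>ball 0 \<rho>. ennreal (F z * G \<rho> z) \<partial>lborel) \<partial>lborel)"
    by (intro nn_integral_cong) (auto simp: H_def indicator_def intro!: nn_integral_cong)
  finally show ?thesis
    by (simp only: G_def)
qed

lemma set_nn_integral_ball_le_maximal_sphere:
  fixes g \<psi> :: "'a::euclidean_space \<Rightarrow> real"
  assumes q: "q > 1" and q': "q' = q / (q - 1)"
    and g_cont: "continuous_on UNIV g" and g_nonneg: "\<And>z. 0 \<le> g z" and g_le: "\<And>z. g z \<le> B"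
    and \<psi>_cont: "continuous_on UNIV \<psi>"
    and xy: "dist x y \<le> R2" and R: "0 \<le> R" "R < R2 + \<rho>" and \<rho>: "0 < \<rho>"
  shows "(\<integral>\<^sup>+z\<in>ball 0 \<rho>. ennreal (g (y - z) * \<bar>\<psi> (z /\<^sub>R norm z)\<bar>) \<partial>lborel)
    \<le> ennreal ((pi powr (real DIM('a) / 2) / Gamma (real DIM('a) / 2 + 1)) powr (1 / q)
          * (1 / real DIM('a)) powr (1 / q')
          * (maximal_fun R (\<lambda>z. g z powr q) x) powr (1 / q))
      * ennreal ((R2 + \<rho>) ^ DIM('a) * (\<integral>w. \<bar>\<psi> w\<bar> powr q' \<partial>sphere_measure) powr (1 / q'))"
proof -
  define \<omega> where "\<omega> = pi powr (real DIM('a) / 2) / Gamma (real DIM('a) / 2 + 1)"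
  define M where "M = maximal_fun R (\<lambda>z. g z powr q) x"
  define S where "S = (\<integral>w. \<bar>\<psi> w\<bar> powr q' \<partial>sphere_measure)"
  define F where "F z = g (y - z) * indicator (ball 0 \<rho>) z" for z
  define G where "G z = \<bar>\<psi> (z /\<^sub>R norm z)\<bar> * indicator (ball 0 \<rho>) z" for z
  have q'1: "q' > 1"
    using q by (simp add: q' less_divide_eq)
  have R2: "0 \<le> R2"
    using xy zero_le_dist[of x y] by linarith
  have [measurable]: "g \<in> borel_measurable borel" "\<psi> \<in> borel_measurable borel"
    using g_cont \<psi>_cont by (auto intro: borel_measurable_continuous_onI)
  have [measurable]: "ball (0::'a) \<rho> \<in> sets borel"
    by simp
  have gq: "continuous_on UNIV (\<lambda>z. g z powr q)" "\<And>z. 0 \<le> g z powr q" "\<And>z. g z powr q \<le> B powr q"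
    using q g_nonneg g_le by (auto intro!: continuous_on_powr' g_cont continuous_on_const powr_mono2)
  have \<psi>q': "continuous_on UNIV (\<lambda>w. \<bar>\<psi> w\<bar> powr q')"
    using q'1 by (intro continuous_on_powr' continuous_on_rabs \<psi>_cont continuous_on_const) auto
  have F_powr: "(\<integral>\<^sup>+z. ennreal (F z powr q) \<partial>lborel) \<le> ennreal (M * (\<omega> * (R2 + \<rho>) ^ DIM('a)))"
  proof -
    have "(\<integral>\<^sup>+z. ennreal (F z powr q) \<partial>lborel) = (\<integral>\<^sup>+z\<in>ball 0 \<rho>. ennreal (g (y - z) powr q) \<partial>lborel)"
      using q by (intro nn_integral_cong) (auto simp: F_def indicator_def)
    also have "\<dots> \<le> ennreal (M * measure lborel (ball x (R2 + \<rho>)))"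
      unfolding M_def by (rule set_nn_integral_reflected_ball_le_maximal_fun[OF gq xy R])
    finally show ?thesis
      using R by (simp add: content_ball unit_ball_vol_def \<omega>_def)
  qed
  have G_powr: "(\<integral>\<^sup>+z. ennreal (G z powr q') \<partial>lborel) = ennreal (\<rho> ^ DIM('a) / DIM('a) * S)"
  proof -
    have "(\<integral>\<^sup>+z. ennreal (G z powr q') \<partial>lborel)
        = (\<integral>\<^sup>+z\<in>ball 0 \<rho>. ennreal (\<bar>\<psi> (z /\<^sub>R norm z)\<bar> powr q') \<partial>lborel)"
      using q'1 by (intro nn_integral_cong) (auto simp: G_def indicator_def)
    then show ?thesis
      unfolding S_def using set_nn_integral_radial_ball_eq_integral[OF \<psi>q' _ \<rho>] by simp
  qed
  have "0 \<le> M"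
    unfolding M_def using R(1) by (rule maximal_fun_nonneg[OF gq])
  have "0 \<le> S"
    unfolding S_def by (intro Bochner_Integration.integral_nonneg) auto
  have "(\<integral>\<^sup>+z\<in>ball 0 \<rho>. ennreal (g (y - z) * \<bar>\<psi> (z /\<^sub>R norm z)\<bar>) \<partial>lborel)
      = (\<integral>\<^sup>+z. ennreal (F z * G z) \<partial>lborel)"
    by (intro nn_integral_cong) (auto simp: F_def G_def indicator_def)
  also have "\<dots> \<le> ennreal ((M * (\<omega> * (R2 + \<rho>) ^ DIM('a))) powr (1/q) * (\<rho> ^ DIM('a) / DIM('a) * S) powr (1/q'))"
    using \<open>0 \<le> M\<close> \<open>0 \<le> S\<close> R2 \<rho>
    by (intro nn_integral_mult_le_Hoelder[OF q q' _ _ _ _ F_powr G_powr[THEN eq_refl]])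
      (auto simp: F_def G_def \<omega>_def g_nonneg)
  also have "\<dots> \<le> ennreal (\<omega> powr (1/q) * (1 / real DIM('a)) powr (1/q') * M powr (1/q)
      * ((R2 + \<rho>) ^ DIM('a) * S powr (1/q')))"
    using \<open>0 \<le> M\<close> \<open>0 \<le> S\<close> R2 \<rho>
    by (intro ennreal_leI conjugate_powr_mult_le[OF q q']) (auto simp: \<omega>_def)
  also have "\<dots> = ennreal (\<omega> powr (1/q) * (1 / real DIM('a)) powr (1/q') * M powr (1/q))
      * ennreal ((R2 + \<rho>) ^ DIM('a) * S powr (1/q'))"
    using R2 \<rho> by (intro ennreal_mult) auto
  finally show ?thesis
    unfolding \<omega>_def M_def S_def .
qed

lemma set_nn_integral_shells_le_maximal_sphere:
  fixes g :: "'a::euclidean_space \<Rightarrow> real" and \<Psi> :: "real \<Rightarrow> 'a \<Rightarrow> real"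
  assumes q: "q > 1" and q': "q' = q / (q - 1)"
    and g_cont: "continuous_on UNIV g" and g_nonneg: "\<And>z. 0 \<le> g z" and g_le: "\<And>z. g z \<le> B"
    and \<Psi>_cont: "continuous_on UNIV (\<lambda>(\<rho>, w). \<Psi> \<rho> w)"
    and xy: "dist x y \<le> R2" and R1: "0 \<le> R1"
  shows "(\<integral>\<^sup>+\<rho>\<in>{R1<..}. (\<integral>\<^sup>+z\<in>ball 0 \<rho>. ennreal (g (y - z) * \<bar>\<Psi> \<rho> (z /\<^sub>R norm z)\<bar>) \<partial>lborel) \<partial>lborel)
    \<le> ennreal ((pi powr (real DIM('a) / 2) / Gamma (real DIM('a) / 2 + 1)) powr (1 / q)
          * (1 / real DIM('a)) powr (1 / q')
          * (maximal_fun (R1 + R2) (\<lambda>z. g z powr q) x) powr (1 / q))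
      * (\<integral>\<^sup>+\<rho>\<in>{R1<..}. ennreal ((R2 + \<rho>) ^ DIM('a)
          * (\<integral>w. \<bar>\<Psi> \<rho> w\<bar> powr q' \<partial>sphere_measure) powr (1 / q')) \<partial>lborel)"
proof -
  have R2: "0 \<le> R2"
    using xy zero_le_dist[of x y] by linarith
  have [measurable]: "(\<lambda>(\<rho>, w). \<Psi> \<rho> w) \<in> borel_measurable (borel \<Otimes>\<^sub>M borel)"
    unfolding borel_prod using \<Psi>_cont by (rule borel_measurable_continuous_onI)
  have "continuous_on UNIV (\<Psi> \<rho>)" for \<rho>
    using continuous_on_compose2[OF \<Psi>_cont continuous_on_Pair[OF continuous_on_const continuous_on_id]]
    by simp
  then have "(\<integral>\<^sup>+z\<in>ball 0 \<rho>. ennreal (g (y - z) * \<bar>\<Psi> \<rho> (z /\<^sub>R norm z)\<bar>) \<partial>lborel) * indicator {R1<..} \<rho>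
      \<le> ennreal ((pi powr (real DIM('a) / 2) / Gamma (real DIM('a) / 2 + 1)) powr (1 / q)
          * (1 / real DIM('a)) powr (1 / q')
          * (maximal_fun (R1 + R2) (\<lambda>z. g z powr q) x) powr (1 / q))
        * (ennreal ((R2 + \<rho>) ^ DIM('a)
          * (\<integral>w. \<bar>\<Psi> \<rho> w\<bar> powr q' \<partial>sphere_measure) powr (1 / q')) * indicator {R1<..} \<rho>)" for \<rho>
    using R1 R2 xy
    by (cases "R1 < \<rho>")
      (auto simp: mult.assoc[symmetric] intro!: mult_right_mono set_nn_integral_ball_le_maximal_sphere[OF q q' g_cont g_nonneg g_le])
  then show ?thesis
    by (subst nn_integral_cmult[symmetric]) (measurable, rule nn_integral_mono)
qed

theorem lemmaB5:
  fixes q q' R1 R2 :: real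
    and f :: "'a::euclidean_space \<Rightarrow> 'b::banach"
    and v :: "'a \<Rightarrow> real"
    and v' :: "'a \<Rightarrow> 'a \<Rightarrow>\<^sub>L real"
    and x y :: 'a
  assumes q: "q > 1" and q': "q' = q / (q - 1)"
    and f_cont: "continuous_on UNIV f"
    and f_supp: "\<exists>K. compact K \<and> (\<forall>z. z \<notin> K \<longrightarrow> f z = 0)"
    and v_deriv: "\<And>z. (v has_derivative blinfun_apply (v' z)) (at z)"
    and v'_cont: "continuous_on UNIV v'"
    and v_vanish: "(v \<longlongrightarrow> 0) at_infinity"
    and R1: "R1 > 0" and R2: "R2 > 0"
    and xy: "dist x y \<le> R2"
    and f_zero: "\<And>z. norm z \<le> R1 \<Longrightarrow> f (y - z) = 0"
  shows "ennreal (norm (convol f v y))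
    \<le> ennreal ((pi powr (real DIM('a) / 2) / Gamma (real DIM('a) / 2 + 1)) powr (1 / q)
                * (1 / real DIM('a)) powr (1 / q')
                * (maximal_fun (R1 + R2) (\<lambda>z. norm (f z) powr q) x) powr (1 / q))
      * (\<integral>\<^sup>+ \<rho>\<in>{R1<..}. ennreal ((R2 + \<rho>) ^ DIM('a)
            * (\<integral>w. \<bar>blinfun_apply (v' (\<rho> *\<^sub>R w)) w\<bar> powr q' \<partial>sphere_measure) powr (1 / q'))
          \<partial>lborel)"
proof -
  obtain K where K: "compact K" "\<And>z. z \<notin> K \<Longrightarrow> f z = 0"
    using f_supp by blast
  obtain B where B: "\<And>z. norm (f z) \<le> B"
    using bounded_range_compact_support[OF f_cont K] unfolding bounded_iff by blast
  have nf_cont: "continuous_on UNIV (\<lambda>z. norm (f z))"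
    using f_cont by (rule continuous_on_norm)
  have v_cont: "continuous_on UNIV v"
    using v_deriv by (meson continuous_at_imp_continuous_on has_derivative_continuous)
  have v'_ray_cont: "continuous_on UNIV (\<lambda>(\<rho>, w). blinfun_apply (v' (\<rho> *\<^sub>R w)) w)"
    unfolding case_prod_beta' by (intro continuous_intros continuous_on_compose2[OF v'_cont]) auto
  have "ennreal (norm (convol f v y)) \<le> (\<integral>\<^sup>+z. ennreal (\<bar>v z\<bar> * norm (f (y - z))) \<partial>lborel)"
    by (rule norm_convol_le_nn_integral[OF f_cont K v_cont])
  also have "\<dots> \<le> (\<integral>\<^sup>+\<rho>\<in>{R1<..}. (\<integral>\<^sup>+z\<in>ball 0 \<rho>. ennreal (norm (f (y - z))
      * \<bar>blinfun_apply (v' (\<rho> *\<^sub>R (z /\<^sub>R norm z))) (z /\<^sub>R norm z)\<bar>) \<partial>lborel) \<partial>lborel)"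
    using R1 f_zero
    by (intro nn_integral_abs_mult_le_radial[OF v_deriv v'_cont v_vanish]
        borel_measurable_continuous_onI continuous_on_compose2[OF nf_cont]) (auto intro: continuous_intros)
  finally show ?thesis
    using R1 xy B
    by (elim order_trans, intro set_nn_integral_shells_le_maximal_sphere[OF q q' nf_cont _ _ v'_ray_cont]) auto
qed

end
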